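(* Let $\mathfrak{S}=(\mathcal{X},\mathsf{S},\gamma,(\Lambda_{a})_{a\in\mathcal{A}})$ be a spectral decomposition system for the Euclidean space $\mathfrak{H}$ and let $\mathcal{D}\subset\mathfrak{H}$. Then the following are equivalent: (i) for all $X,Y\in\mathfrak{H}$, if $\gamma(X)=\gamma(Y)$ and $X\in\mathcal{D}$, then $Y\in\mathcal{D}$; (ii) there exists an $\mathsf{S}$-invariant subset $D$ of $\mathcal{X}$ such that $\mathcal{D}=\gamma^{-1}(D)$. Moreover, if (ii) holds, then $D=\Lambda_a^{-1}(\mathcal{D})$ for every $a\in\mathcal{A}$.
   Context: A Euclidean space is a finite-dimensional real inner product space; inner products are written $\langle\cdot,\cdot\rangle$ and norms $\|\cdot\|$. Let $\mathfrak{H}$ and $\mathcal{X}$ be Euclidean spaces, let $\mathsf{S}$ be a group acting on $\mathcal{X}$ by linear isometries, let $\gamma\colon\mathfrak{H}\to\mathcal{X}$, and let $(\Lambda_a)_{a\in\mathcal{A}}$ be a family of linear operators from $\mathcal{X}$ to $\mathfrak{H}$. The orbit of $x$ is $\mathsf{S}\cdot x=\{s\cdot x: s\in\mathsf{S}\}$; a map $f$ on $\mathcal{X}$ is $\mathsf{S}$-invariant if $f(s\cdot x)=f(x)$ for all $s,x$; a subset $D$ of $\mathcal{X}$ is $\mathsf{S}$-invariant if $s\cdot x\in D$ whenever $x\in D$, $s\in\mathsf{S}$. The tuple is a spectral decomposition system for $\mathfrak{H}$ if: [A] every $\Lambda_a$ is an isometry; [B] there exists an $\mathsf{S}$-invariant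 $\tau\colon\mathcal{X}\to\mathcal{X}$ with $\tau(x)\in\mathsf{S}\cdot x$ for all $x$ and $\gamma\circ\Lambda_a=\tau$ for all $a$; [C] for every $X\in\mathfrak{H}$ there is $a$ with $X=\Lambda_a\gamma(X)$; [D] $\langle X,Y\rangle\leq\langle\gamma(X),\gamma(Y)\rangle$ for all $X,Y\in\mathfrak{H}$. *)

theory Defs
  imports "HOL-Analysis.Analysis"
begin

definition linear_isometry :: "('a::real_normed_vector \<Rightarrow> 'b::real_normed_vector) \<Rightarrow> bool" where
  "linear_isometry f \<longleftrightarrow> linear f \<and> (\<forall>x. norm (f x) = norm x)"

definition isometry_group :: "('x::euclidean_space \<Rightarrow> 'x) set \<Rightarrow> bool" where
  "isometry_group S \<longleftrightarrow>
     id \<in> S \<and> (\<forall>s\<in>S. \<forall>t\<in>S. s \<circ> t \<in> S) \<and>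
     (\<forall>s\<in>S. bij s \<and> inv s \<in> S) \<and> (\<forall>s\<in>S. linear_isometry s)"

definition orbit :: "('x \<Rightarrow> 'x) set \<Rightarrow> 'x \<Rightarrow> 'x set" where
  "orbit S x = (\<lambda>s. s x) ` S"

definition S_invariant_map :: "('x \<Rightarrow> 'x) set \<Rightarrow> ('x \<Rightarrow> 'b) \<Rightarrow> bool" where
  "S_invariant_map S f \<longleftrightarrow> (\<forall>s\<in>S. \<forall>x. f (s x) = f x)"

definition S_invariant_set :: "('x \<Rightarrow> 'x) set \<Rightarrow> 'x set \<Rightarrow> bool" where
  "S_invariant_set S D \<longleftrightarrow> (\<forall>s\<in>S. \<forall>x\<in>D. s x \<in> D)"

definition spectral_decomposition_system ::
  "('x::euclidean_space \<Rightarrow> 'x) set \<Rightarrow> ('h::euclidean_space \<Rightarrow> 'x) \<Rightarrow> ('a \<Rightarrow> 'x \<Rightarrow> 'h) \<Rightarrow> bool" where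
  "spectral_decomposition_system S \<gamma> \<Lambda> \<longleftrightarrow>
     isometry_group S \<and>
     (\<forall>a. linear_isometry (\<Lambda> a)) \<and>
     (\<exists>\<tau>. S_invariant_map S \<tau> \<and> (\<forall>x. \<tau> x \<in> orbit S x) \<and> (\<forall>a. \<gamma> \<circ> \<Lambda> a = \<tau>)) \<and>
     (\<forall>X. \<exists>a. X = \<Lambda> a (\<gamma> X)) \<and>
     (\<forall>X Y. inner X Y \<le> inner (\<gamma> X) (\<gamma> Y))"

end

theory Submission
  imports Defs
begin

text \<open>By axiom [B], \<open>\<gamma> \<circ> \<Lambda> a = \<tau>\<close> sends every point into its own orbit and is constant
  on orbits. Hence for an invariant \<open>D\<close> we get \<open>\<Lambda> a -` \<gamma> -` D = \<tau> -` D = D\<close>. Conversely, by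
  [C] every \<open>X\<close> satisfies \<open>\<gamma> (\<Lambda> a (\<gamma> X)) = \<gamma> X\<close>, so a set \<open>\<D>\<close> that is saturated for \<open>\<gamma>\<close>
  equals \<open>\<gamma> -` (\<Lambda> a -` \<D>)\<close>, and \<open>\<Lambda> a -` \<D>\<close> is invariant because \<open>\<tau>\<close> is.\<close>

lemma S_invariant_set_orbit_iff:
  assumes "isometry_group S" "S_invariant_set S D" "y \<in> orbit S x"
  shows "y \<in> D \<longleftrightarrow> x \<in> D"
proof -
  obtain s where s: "s \<in> S" "y = s x"
    using assms(3) unfolding orbit_def by blast
  have "bij s" "inv s \<in> S"
    using assms(1) s(1) unfolding isometry_group_def by auto
  then have "x = inv s y"
    using s(2) by (simp add: bij_is_inj)
  then show ?thesis
    using assms(2) s \<open>inv s \<in> S\<close> unfolding S_invariant_set_def by metis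
qed

context
  fixes S :: "('x::euclidean_space \<Rightarrow> 'x) set"
    and \<gamma> :: "'h::euclidean_space \<Rightarrow> 'x"
    and \<Lambda> :: "'a \<Rightarrow> 'x \<Rightarrow> 'h"
  assumes sds: "spectral_decomposition_system S \<gamma> \<Lambda>"
begin

lemma gamma_Lambda_in_orbit: "\<gamma> (\<Lambda> a x) \<in> orbit S x"
  using sds unfolding spectral_decomposition_system_def by (metis comp_apply)

lemma gamma_Lambda_S_invariant: "s \<in> S \<Longrightarrow> \<gamma> (\<Lambda> a (s x)) = \<gamma> (\<Lambda> a x)"
  using sds unfolding spectral_decomposition_system_def S_invariant_map_def
  by (metis comp_apply)

lemma gamma_Lambda_gamma: "\<gamma> (\<Lambda> a (\<gamma> X)) = \<gamma> X"
proof -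
  obtain b where b: "X = \<Lambda> b (\<gamma> X)"
    using sds unfolding spectral_decomposition_system_def by blast
  have "\<gamma> \<circ> \<Lambda> a = \<gamma> \<circ> \<Lambda> b"
    using sds unfolding spectral_decomposition_system_def by metis
  then have "\<gamma> (\<Lambda> a (\<gamma> X)) = \<gamma> (\<Lambda> b (\<gamma> X))"
    by (metis comp_apply)
  with b show ?thesis by simp
qed

lemma Lambda_vimage_gamma_vimage:
  assumes "S_invariant_set S D"
  shows "\<Lambda> a -` (\<gamma> -` D) = D"
proof -
  have "isometry_group S"
    using sds unfolding spectral_decomposition_system_def by blast
  then have "\<gamma> (\<Lambda> a x) \<in> D \<longleftrightarrow> x \<in> D" for x
    using assms S_invariant_set_orbit_iff gamma_Lambda_in_orbit by blast
  then show ?thesis by auto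
qed

lemma S_invariant_set_Lambda_vimage:
  assumes "\<forall>X Y. \<gamma> X = \<gamma> Y \<and> X \<in> \<D> \<longrightarrow> Y \<in> \<D>"
  shows "S_invariant_set S (\<Lambda> a -` \<D>)"
  using assms gamma_Lambda_S_invariant unfolding S_invariant_set_def by (metis vimageE vimageI)

lemma gamma_vimage_Lambda_vimage:
  assumes "\<forall>X Y. \<gamma> X = \<gamma> Y \<and> X \<in> \<D> \<longrightarrow> Y \<in> \<D>"
  shows "\<gamma> -` (\<Lambda> a -` \<D>) = \<D>"
  using assms gamma_Lambda_gamma by auto

end

theorem corollary4p3:
  fixes S :: "('x::euclidean_space \<Rightarrow> 'x) set"
    and \<gamma> :: "'h::euclidean_space \<Rightarrow> 'x"
    and \<Lambda> :: "'a \<Rightarrow> 'x \<Rightarrow> 'h"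
    and \<D> :: "'h set"
  assumes "spectral_decomposition_system S \<gamma> \<Lambda>"
  shows "((\<forall>X Y. \<gamma> X = \<gamma> Y \<and> X \<in> \<D> \<longrightarrow> Y \<in> \<D>) \<longleftrightarrow>
          (\<exists>D. S_invariant_set S D \<and> \<D> = \<gamma> -` D))
         \<and> (\<forall>D. S_invariant_set S D \<and> \<D> = \<gamma> -` D \<longrightarrow> (\<forall>a. D = \<Lambda> a -` \<D>))"
proof (intro conjI iffI allI impI)
  assume "\<forall>X Y. \<gamma> X = \<gamma> Y \<and> X \<in> \<D> \<longrightarrow> Y \<in> \<D>"
  then show "\<exists>D. S_invariant_set S D \<and> \<D> = \<gamma> -` D"
    using S_invariant_set_Lambda_vimage[OF assms] gamma_vimage_Lambda_vimage[OF assms] by metis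
next
  fix X Y
  assume "\<exists>D. S_invariant_set S D \<and> \<D> = \<gamma> -` D" "\<gamma> X = \<gamma> Y \<and> X \<in> \<D>"
  then show "Y \<in> \<D>" by auto
next
  fix D a
  assume "S_invariant_set S D \<and> \<D> = \<gamma> -` D"
  then show "D = \<Lambda> a -` \<D>"
    using Lambda_vimage_gamma_vimage[OF assms] by simp
qed

end
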